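(* Let $n\ge2$. For $j\le m$ let $P_j^m$ denote the joint distribution of $(\tau_1^m,\dots,\tau_j^m)$. Then the law $P_{n-1}^n$ of $(\tau_1^n,\dots,\tau_{n-1}^n)$ has, with respect to the law $P_{n-1}^{n-1}$ of $(\tau_1^{n-1},\dots,\tau_{n-1}^{n-1})$, the density \[ \frac{P_{n-1}^n(t_1,\dots,t_{n-1})}{P_{n-1}^{n-1}(t_1,\dots,t_{n-1})} = K_n\Big(1-\frac1n\Big)^{(n-1)\big(\frac{1}{n-1}\sum_{i=1}^{n-1}(t_i-\log(n-1))\big)}, \] for $(t_1,\dots,t_{n-1})$ in the support of $P_{n-1}^{n-1}$.
   Context: For $m\ge1$, $\tau_1^m,\dots,\tau_m^m$ are independent with $\tau_i^m\sim\operatorname{Geom}\big(\frac{m-i+1}{m}\big)$, where $\operatorname{Geom}(p)$ is the geometric law on $\{1,2,\dots\}$, $P(k)=p(1-p)^{k-1}$ (with $0^0=1$). $K_n=n\big(1-\frac1n\big)^{(n-1)\log(n-1)}$. *)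

theory Defs
  imports "HOL-Probability.Probability"
begin

text \<open>Geometric law on {1,2,...} with success probability p: P(k) = p (1-p)^(k-1).
  The library's geometric_pmf counts failures (support {0,1,...}), so we shift by one.\<close>
definition geom1_pmf :: "real \<Rightarrow> nat pmf" where
  "geom1_pmf p = map_pmf Suc (geometric_pmf p)"

text \<open>Joint law P_j^m of (tau_1^m, ..., tau_j^m), independent, tau_i^m ~ Geom((m-i+1)/m).
  A vector (t_1,...,t_j) is represented as a function t :: nat => nat with t i = 0 for i outside {1..j}.\<close>
definition tau_law :: "nat \<Rightarrow> nat \<Rightarrow> (nat \<Rightarrow> nat) pmf" where
  "tau_law m j = Pi_pmf {1..j} 0 (\<lambda>i. geom1_pmf ((real m - real i + 1) / real m))"

definition K :: "nat \<Rightarrow> real" where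
  "K n = real n * (1 - 1 / real n) powr ((real n - 1) * ln (real n - 1))"

end

theory Submission
  imports Defs
begin

text \<open>The likelihood ratio of two product laws is the product of the coordinatewise ratios.
  For the i-th coordinate the failure probabilities (i-1)/n and (i-1)/(n-1) differ by the
  constant factor 1 - 1/n, so the ratio of the two geometric weights at t_i is
  (n-i+1)/(n-i) (1 - 1/n)^t_i. The constants telescope to n, and K_n is exactly the factor
  that compensates for centring each t_i at log(n-1).\<close>

lemma pmf_geom1_pmf:
  assumes "0 < p" "p \<le> 1"
  shows "pmf (geom1_pmf p) k = (if k = 0 then 0 else (1 - p) ^ (k - 1) * p)"
proof (cases k)
  case 0
  then show ?thesis
    unfolding geom1_pmf_def by (simp add: pmf_map measure_pmf_zero_iff vimage_def)
qed (use assms in \<open>simp add: geom1_pmf_def pmf_map_inj'\<close>)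

lemma geom1_pmf_ratio:
  assumes p: "0 < p" "p \<le> 1" and q: "0 < q" "q \<le> 1"
    and scaled: "1 - p = c * (1 - q)"
    and support: "pmf (geom1_pmf q) k \<noteq> 0"
  shows "pmf (geom1_pmf p) k / pmf (geom1_pmf q) k = p / q * c ^ (k - 1)"
proof -
  obtain j where k: "k = Suc j"
    using support q by (cases k) (auto simp: pmf_geom1_pmf)
  have nz: "(1 - q) ^ j \<noteq> 0"
    using support q by (auto simp: pmf_geom1_pmf k)
  have "pmf (geom1_pmf p) k / pmf (geom1_pmf q) k = c ^ j * (1 - q) ^ j * p / ((1 - q) ^ j * q)"
    using p q by (simp add: pmf_geom1_pmf k scaled power_mult_distrib)
  also have "\<dots> = p / q * c ^ (k - 1)"
    using nz q by (simp add: k field_simps del: power_eq_0_iff)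
  finally show ?thesis .
qed

lemma pmf_Pi_pmf_divide:
  assumes "finite I" "t \<in> set_pmf (Pi_pmf I d q)"
  shows "pmf (Pi_pmf I d p) t / pmf (Pi_pmf I d q) t
         = (\<Prod>i\<in>I. pmf (p i) (t i) / pmf (q i) (t i))"
proof -
  have outside: "t i = d" if "i \<notin> I" for i
    using subsetD [OF set_Pi_pmf_subset [OF assms(1)] assms(2)] that by simp
  have "pmf (Pi_pmf I d r) t = (\<Prod>i\<in>I. pmf (r i) (t i))" for r
    using assms(1) outside by (rule pmf_Pi')
  then show ?thesis
    by (simp only: prod_dividef)
qed

lemma tau_factor_ratio:
  assumes n: "n \<ge> 2" and i: "1 \<le> i" "i \<le> n - 1"
    and support: "pmf (geom1_pmf ((real (n - 1) - real i + 1) / real (n - 1))) k \<noteq> 0"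
  shows "pmf (geom1_pmf ((real n - real i + 1) / real n)) k
         / pmf (geom1_pmf ((real (n - 1) - real i + 1) / real (n - 1))) k
         = (real (n - i) + 1) / real (n - i) * (1 - 1 / real n) ^ k"
proof -
  define p where "p = (real n - real i + 1) / real n"
  define q where "q = (real (n - 1) - real i + 1) / real (n - 1)"
  define c where "c = 1 - 1 / real n"
  have n1: "real (n - 1) = real n - 1" and ni: "real (n - i) = real n - real i"
    using n i by auto
  have p: "0 < p" "p \<le> 1" and q: "0 < q" "q \<le> 1"
    using n i by (auto simp: p_def q_def n1)
  have scaled: "1 - p = c * (1 - q)"
    using n unfolding p_def q_def c_def n1 by (simp add: field_simps)
  have "pmf (geom1_pmf p) k / pmf (geom1_pmf q) k = p / q * c ^ (k - 1)"
    using support unfolding q_def [symmetric] by (rule geom1_pmf_ratio [OF p q scaled])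
  moreover obtain j where k: "k = Suc j"
    using support by (cases k) (auto simp: geom1_pmf_def pmf_map measure_pmf_zero_iff vimage_def)
  moreover have "p / q * c ^ j = (real (n - i) + 1) / real (n - i) * c ^ Suc j"
    using n i unfolding p_def q_def c_def n1 ni by (simp add: field_simps)
  ultimately show ?thesis
    unfolding p_def q_def c_def by simp
qed

lemma prod_reversed_succ_ratio:
  assumes "n \<ge> 1"
  shows "(\<Prod>i = 1..n - 1. (real (n - i) + 1) / real (n - i)) = real n"
proof -
  define f where "f i = 1 / real (n - i)" for i
  have "(\<Prod>i = 1..n - 1. (real (n - i) + 1) / real (n - i)) = (\<Prod>i = Suc 0..n - 1. f i / f (i - 1))"
    by (rule prod.cong) (auto simp: f_def Suc_diff_le)
  also have "\<dots> = f (n - 1) / f 0"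
    using assms by (intro prod_telescope'') (auto simp: f_def)
  finally show ?thesis
    using assms by (simp add: f_def)
qed

lemma K_times_centered_powr:
  fixes t :: "nat \<Rightarrow> nat"
  assumes "n \<ge> 2"
  shows "K n * (1 - 1 / real n) powr ((real n - 1) *
           ((1 / (real n - 1)) * (\<Sum>i = 1..n - 1. (real (t i) - ln (real n - 1)))))
         = real n * (1 - 1 / real n) ^ (\<Sum>i = 1..n - 1. t i)"
proof -
  define q where "q = 1 - 1 / real n"
  define S where "S = real (\<Sum>i = 1..n - 1. t i)"
  define A where "A = (real n - 1) * ln (real n - 1)"
  have "(real n - 1) * ((1 / (real n - 1)) * (\<Sum>i = 1..n - 1. (real (t i) - ln (real n - 1))))
        = S - A"
    using assms by (simp add: S_def A_def sum_subtractf)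
  then have "K n * q powr ((real n - 1) *
               ((1 / (real n - 1)) * (\<Sum>i = 1..n - 1. (real (t i) - ln (real n - 1)))))
             = real n * (q powr A * q powr (S - A))"
    by (simp add: K_def q_def A_def)
  also have "\<dots> = real n * q powr S"
    by (simp flip: powr_add)
  also have "\<dots> = real n * q ^ (\<Sum>i = 1..n - 1. t i)"
    using assms unfolding S_def q_def by (intro arg_cong2[where f = "(*)"] powr_realpow) simp_all
  finally show ?thesis
    unfolding q_def .
qed

theorem lemma3p6:
  fixes n :: nat and t :: "nat \<Rightarrow> nat"
  assumes "n \<ge> 2"
    and "t \<in> set_pmf (tau_law (n - 1) (n - 1))"
  shows "pmf (tau_law n (n - 1)) t / pmf (tau_law (n - 1) (n - 1)) t
         = K n * (1 - 1 / real n) powr ((real n - 1) *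
             ((1 / (real n - 1)) * (\<Sum>i = 1..n - 1. (real (t i) - ln (real n - 1)))))"
proof -
  let ?p = "\<lambda>m i. geom1_pmf ((real m - real i + 1) / real m)"
  have support: "pmf (?p (n - 1) i) (t i) \<noteq> 0" if "i \<in> {1..n - 1}" for i
    using assms(2) that
    by (auto simp: tau_law_def set_Pi_pmf PiE_dflt_def set_pmf_iff)
  have "pmf (tau_law n (n - 1)) t / pmf (tau_law (n - 1) (n - 1)) t
        = (\<Prod>i = 1..n - 1. pmf (?p n i) (t i) / pmf (?p (n - 1) i) (t i))"
    using assms(2) unfolding tau_law_def by (intro pmf_Pi_pmf_divide) auto
  also have "\<dots> = (\<Prod>i = 1..n - 1. (real (n - i) + 1) / real (n - i) * (1 - 1 / real n) ^ t i)"
    using assms(1) support by (intro prod.cong refl tau_factor_ratio) auto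
  also have "\<dots> = real n * (1 - 1 / real n) ^ (\<Sum>i = 1..n - 1. t i)"
    using assms(1) by (simp only: prod.distrib power_sum prod_reversed_succ_ratio)
  also have "\<dots> = K n * (1 - 1 / real n) powr ((real n - 1) *
             ((1 / (real n - 1)) * (\<Sum>i = 1..n - 1. (real (t i) - ln (real n - 1)))))"
    using assms(1) by (rule K_times_centered_powr[symmetric])
  finally show ?thesis .
qed

end
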